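(* Let $(\Omega,\mathcal F,\Pr)$ be a probability space with filtration $\{\mathcal F_n\}_{n\ge0}$, and let $\{z_n\},\{a_n\},\{x_n\},\{y_n\}$ be non-negative real-valued sequences adapted to $\{\mathcal F_n\}$ satisfying $$\mathbb{E}[z_{n+1}\mid\mathcal F_n]\le(1+a_n)z_n+x_n-y_n\quad\text{a.s. for all }n\ge0.$$ Suppose: (A1) $\sum_n a_n<\infty$ a.s.; (A2) $|z_{n+1}-z_n|\le b_n(z_n+1)$ a.s. for all $n$, where $\{b_n\}$ is a non-negative real-valued sequence adapted to $\{\mathcal F_n\}$ with $\sum_n b_n^2<\infty$ a.s.; (A3) there is a constant $B\ge 0$ such that for all $n$, $z_n>B$ implies $x_n-y_n\le -c_n(z_n-B)$, where $\{c_n\}$ is a non-negative real-valued sequence adapted to $\{\mathcal F_n\}$ with $\sum_n c_n=\infty$ a.s. Then $\lim_{n\to\infty} d(z_n,[0,B])=0$ a.s.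
   Context: For $z\in\mathbb R$ and an interval $Z\subset\mathbb R$, $d(z,Z)\doteq\inf_{\tilde z\in Z}|z-\tilde z|$; in particular $d(z,[0,B])=\max(z-B,0)$ for $z\ge 0$. *)

theory Defs
  imports "HOL-Probability.Probability"
begin

end

theory Submission
  imports Defs
begin

text \<open>
  Put \<open>u n = (max (z n - B) 0)\<^sup>2\<close>, the squared distance of \<open>z n\<close> to \<open>[0, B]\<close>.
  Expanding the square and using (A2), (A3) and the drift inequality gives
  \<open>E[u (n + 1) | F n] + 2 c n u n \<le> (1 + A n) u n + C n\<close> with summable \<open>A\<close> and \<open>C\<close>,
  so \<open>u\<close> is a nonnegative almost-supermartingale in the sense of Robbins and Siegmund.
  Their theorem is proved here, for general \<open>V\<close>, \<open>C\<close> and \<open>D\<close>, in a weak form that needs no martingale convergence theorem: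
  the decrease terms are summable, and \<open>u n \<longrightarrow> 0\<close> as soon as \<open>liminf u = 0\<close>.
  After normalising by the products of the factors \<open>1 + A k\<close> and localising to events on
  which \<open>V 0\<close> and \<open>\<Sum>k. C k\<close> are bounded, \<open>V n\<close> plus the tail \<open>\<Sum>k\<ge>n. C k\<close> is a
  nonnegative supermartingale, and optional stopping bounds the probability that \<open>V\<close>, having
  dropped below \<open>\<eta>\<close> after time \<open>m\<close>, later climbs above \<open>\<lambda>\<close> by
  \<open>(\<eta> + E (\<Sum>k\<ge>m. C k)) / \<lambda>\<close>. Finally \<open>\<Sum>n. c n u n < \<infinity>\<close> and \<open>\<Sum>n. c n = \<infinity>\<close>
  force \<open>liminf u = 0\<close>, hence \<open>u n \<longrightarrow> 0\<close>.
\<close>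

section \<open>Conditional expectation inequalities\<close>

lemma (in sigma_finite_subalgebra) nn_integral_indicator_le_of_cond_exp:
  assumes [measurable]: "f \<in> borel_measurable M" "g \<in> borel_measurable F" "h \<in> borel_measurable F"
    and le: "AE \<omega> in M. nn_cond_exp M F f \<omega> + g \<omega> \<le> h \<omega>"
    and A[measurable]: "A \<in> sets F"
  shows "(\<integral>\<^sup>+\<omega>. indicator A \<omega> * f \<omega> \<partial>M) + (\<integral>\<^sup>+\<omega>. indicator A \<omega> * g \<omega> \<partial>M)
          \<le> (\<integral>\<^sup>+\<omega>. indicator A \<omega> * h \<omega> \<partial>M)"
proof -
  have [measurable]: "A \<in> sets M" using A subalg by (meson subalgebra_def subsetD)
  have [measurable]: "g \<in> borel_measurable M" "h \<in> borel_measurable M"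
    by (rule measurable_from_subalg[OF subalg], simp)+
  have "(\<integral>\<^sup>+\<omega>. indicator A \<omega> * f \<omega> \<partial>M) = (\<integral>\<^sup>+\<omega>. indicator A \<omega> * nn_cond_exp M F f \<omega> \<partial>M)"
    by (rule nn_cond_exp_intg[symmetric]) auto
  then have "(\<integral>\<^sup>+\<omega>. indicator A \<omega> * f \<omega> \<partial>M) + (\<integral>\<^sup>+\<omega>. indicator A \<omega> * g \<omega> \<partial>M)
     = (\<integral>\<^sup>+\<omega>. indicator A \<omega> * nn_cond_exp M F f \<omega> + indicator A \<omega> * g \<omega> \<partial>M)"
    by (simp add: nn_integral_add)
  also have "\<dots> \<le> (\<integral>\<^sup>+\<omega>. indicator A \<omega> * h \<omega> \<partial>M)"
    using le by (intro nn_integral_mono_AE, eventually_elim)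
      (auto simp: indicator_def distrib_left[symmetric])
  finally show ?thesis .
qed

lemma (in sigma_finite_subalgebra) nn_cond_exp_add_le_affine:
  assumes le: "AE \<omega> in M. f \<omega> + k \<omega> \<le> g \<omega> + h \<omega> * f' \<omega>"
    and [measurable]: "f \<in> borel_measurable M" "f' \<in> borel_measurable M"
      "k \<in> borel_measurable F" "g \<in> borel_measurable F" "h \<in> borel_measurable F"
  shows "AE \<omega> in M. nn_cond_exp M F f \<omega> + k \<omega> \<le> g \<omega> + h \<omega> * nn_cond_exp M F f' \<omega>"
proof -
  have [measurable]: "k \<in> borel_measurable M" "g \<in> borel_measurable M" "h \<in> borel_measurable M"
    by (rule measurable_from_subalg[OF subalg], simp)+
  have "AE \<omega> in M. nn_cond_exp M F (\<lambda>\<omega>. f \<omega> + k \<omega>) \<omega> \<le> nn_cond_exp M F (\<lambda>\<omega>. g \<omega> + h \<omega> * f' \<omega>) \<omega>"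
    using le by (rule nn_cond_exp_mono) auto
  moreover have "AE \<omega> in M. nn_cond_exp M F f \<omega> + nn_cond_exp M F k \<omega> = nn_cond_exp M F (\<lambda>\<omega>. f \<omega> + k \<omega>) \<omega>"
    by (rule nn_cond_exp_sum) auto
  moreover have "AE \<omega> in M. nn_cond_exp M F g \<omega> + nn_cond_exp M F (\<lambda>\<omega>. h \<omega> * f' \<omega>) \<omega>
      = nn_cond_exp M F (\<lambda>\<omega>. g \<omega> + h \<omega> * f' \<omega>) \<omega>"
    by (rule nn_cond_exp_sum) auto
  moreover have "AE \<omega> in M. k \<omega> = nn_cond_exp M F k \<omega>" "AE \<omega> in M. g \<omega> = nn_cond_exp M F g \<omega>"
    by (rule nn_cond_exp_F_meas; simp)+
  moreover have "AE \<omega> in M. h \<omega> * nn_cond_exp M F f' \<omega> = nn_cond_exp M F (\<lambda>\<omega>. h \<omega> * f' \<omega>) \<omega>"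
    by (rule nn_cond_exp_prod) auto
  ultimately show ?thesis
  proof eventually_elim
    case (elim \<omega>)
    have "nn_cond_exp M F f \<omega> + k \<omega> = nn_cond_exp M F (\<lambda>\<omega>. f \<omega> + k \<omega>) \<omega>"
      using elim(2,4) by simp
    also have "\<dots> \<le> nn_cond_exp M F (\<lambda>\<omega>. g \<omega> + h \<omega> * f' \<omega>) \<omega>"
      by (rule elim(1))
    also have "\<dots> = g \<omega> + h \<omega> * nn_cond_exp M F f' \<omega>"
      using elim(3,5,6) by simp
    finally show ?case .
  qed
qed

lemma (in sigma_finite_subalgebra) nn_cond_exp_mult_le:
  assumes le: "AE \<omega> in M. nn_cond_exp M F f \<omega> + g \<omega> \<le> h \<omega>"
    and [measurable]: "f \<in> borel_measurable M" "q \<in> borel_measurable F"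
  shows "AE \<omega> in M. nn_cond_exp M F (\<lambda>\<omega>. q \<omega> * f \<omega>) \<omega> + q \<omega> * g \<omega> \<le> q \<omega> * h \<omega>"
proof -
  have "AE \<omega> in M. q \<omega> * nn_cond_exp M F f \<omega> = nn_cond_exp M F (\<lambda>\<omega>. q \<omega> * f \<omega>) \<omega>"
    by (rule nn_cond_exp_prod) auto
  with le show ?thesis
  proof eventually_elim
    case (elim \<omega>)
    then show ?case
      by (metis distrib_left mult_left_mono zero_le)
  qed
qed

section \<open>Hitting times and optional stopping\<close>

text \<open>Truncated at \<open>N\<close>, so that the \<open>LEAST\<close> is always attained.\<close>

definition hitting_time :: "(nat \<Rightarrow> 'a \<Rightarrow> bool) \<Rightarrow> nat \<Rightarrow> 'a \<Rightarrow> nat" where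
  "hitting_time P N \<omega> = (LEAST k. P k \<omega> \<or> k = N)"

lemma hitting_time_le_bound: "hitting_time P N \<omega> \<le> N"
  unfolding hitting_time_def by (rule Least_le) simp

lemma hitting_time_le: "P k \<omega> \<Longrightarrow> hitting_time P N \<omega> \<le> k"
  unfolding hitting_time_def by (rule Least_le) simp

lemma hitting_time_hits: "hitting_time P N \<omega> < N \<Longrightarrow> P (hitting_time P N \<omega>) \<omega>"
  using LeastI[of "\<lambda>k. P k \<omega> \<or> k = N" N] unfolding hitting_time_def by auto

lemma hitting_time_le_iff: "hitting_time P N \<omega> \<le> t \<longleftrightarrow> (\<exists>k\<le>t. P k \<omega> \<or> k = N)"
proof
  assume "hitting_time P N \<omega> \<le> t"
  then show "\<exists>k\<le>t. P k \<omega> \<or> k = N"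
    using LeastI[of "\<lambda>k. P k \<omega> \<or> k = N" N] unfolding hitting_time_def by auto
next
  assume "\<exists>k\<le>t. P k \<omega> \<or> k = N"
  then show "hitting_time P N \<omega> \<le> t"
    using hitting_time_le hitting_time_le_bound order_trans by metis
qed

locale filtered_prob_space = prob_space M for M :: "'a measure" +
  fixes F :: "nat \<Rightarrow> 'a measure"
  assumes subalgebra_F: "\<And>n. subalgebra M (F n)"
    and sets_F_mono: "\<And>n m. n \<le> m \<Longrightarrow> sets (F n) \<subseteq> sets (F m)"
begin

lemma sigma_finite_subalgebra_F: "sigma_finite_subalgebra M (F n)"
  by (intro finite_measure_subalgebra_is_sigma_finite finite_measure_subalgebra.intro
      finite_measure_axioms finite_measure_subalgebra_axioms.intro subalgebra_F)

lemma space_F [simp]: "space (F n) = space M"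
  using subalgebra_F[of n] by (simp add: subalgebra_def)

lemma sets_F_subset: "sets (F n) \<subseteq> sets M"
  using subalgebra_F[of n] by (simp add: subalgebra_def)

lemma sets_M_of_F: "A \<in> sets (F n) \<Longrightarrow> A \<in> sets M"
  using sets_F_subset by blast

lemma measurable_F_mono: "f \<in> measurable (F k) N \<Longrightarrow> k \<le> n \<Longrightarrow> f \<in> measurable (F n) N"
  using sets_F_mono[of k n] by (auto simp: measurable_def)

lemma measurable_M_of_F: "f \<in> measurable (F n) N \<Longrightarrow> f \<in> measurable M N"
  by (rule measurable_from_subalg[OF subalgebra_F])

lemma measurable_stopping_time_count_space:
  assumes "stopping_time F \<tau>"
  shows "\<tau> \<in> measurable M (count_space UNIV)"
  using measurable_stopping_time[OF assms sets_F_subset space_F]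
  by (simp add: measurable_cong_sets[OF refl sets_borel_eq_count_space])

lemma nn_integral_stopped_le:
  fixes Y :: "nat \<Rightarrow> 'a \<Rightarrow> ennreal" and \<tau> \<sigma> :: "'a \<Rightarrow> nat"
  assumes Y[measurable]: "\<And>n. Y n \<in> borel_measurable M"
    and supermartingale: "\<And>n A. A \<in> sets (F n) \<Longrightarrow>
      (\<integral>\<^sup>+\<omega>. indicator A \<omega> * Y (Suc n) \<omega> \<partial>M) \<le> (\<integral>\<^sup>+\<omega>. indicator A \<omega> * Y n \<omega> \<partial>M)"
    and \<tau>: "stopping_time F \<tau>" and \<sigma>: "stopping_time F \<sigma>"
    and \<tau>_le_\<sigma>: "\<And>\<omega>. \<tau> \<omega> \<le> \<sigma> \<omega>" and \<sigma>_le: "\<And>\<omega>. \<sigma> \<omega> \<le> N"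
    and A: "\<And>k. {\<omega> \<in> A. \<tau> \<omega> \<le> k} \<in> sets (F k)"
  shows "(\<integral>\<^sup>+\<omega>. indicator A \<omega> * Y (\<sigma> \<omega>) \<omega> \<partial>M) \<le> (\<integral>\<^sup>+\<omega>. indicator A \<omega> * Y (\<tau> \<omega>) \<omega> \<partial>M)"
proof -
  txt \<open>\<open>\<rho> j\<close> moves from \<open>\<rho> 0 = \<tau>\<close> to \<open>\<rho> N = \<sigma>\<close>; the step from \<open>j\<close> to \<open>Suc j\<close> changes it
    only on the \<open>F j\<close>-event \<open>H\<close> below, where the supermartingale inequality applies.\<close>
  define \<rho> where "\<rho> j \<omega> = min (\<sigma> \<omega>) (max (\<tau> \<omega>) j)" for j \<omega>
  have [measurable]: "\<tau> \<in> measurable M (count_space UNIV)" "\<sigma> \<in> measurable M (count_space UNIV)"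
    using \<tau> \<sigma> by (simp_all add: measurable_stopping_time_count_space)
  have [measurable]: "\<rho> j \<in> measurable M (count_space UNIV)" for j
    unfolding \<rho>_def by measurable
  have "A = {\<omega> \<in> A. \<tau> \<omega> \<le> N}"
    using \<tau>_le_\<sigma> \<sigma>_le order_trans by blast
  then have [measurable]: "A \<in> sets M"
    using A[of N] sets_F_subset by auto
  have step: "(\<integral>\<^sup>+\<omega>. indicator A \<omega> * Y (\<rho> (Suc j) \<omega>) \<omega> \<partial>M) \<le> (\<integral>\<^sup>+\<omega>. indicator A \<omega> * Y (\<rho> j \<omega>) \<omega> \<partial>M)" for j
  proof -
    define H where "H = {\<omega> \<in> A. \<tau> \<omega> \<le> j \<and> j < \<sigma> \<omega>}"
    have "H = {\<omega> \<in> A. \<tau> \<omega> \<le> j} \<inter> {\<omega> \<in> space (F j). j < \<sigma> \<omega>}"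
      using sets.sets_into_space[OF \<open>A \<in> sets M\<close>] by (auto simp: H_def)
    moreover have "{\<omega> \<in> space (F j). j < \<sigma> \<omega>} \<in> sets (F j)"
      using stopping_timeD2[OF \<sigma>] by measurable
    ultimately have H_F: "H \<in> sets (F j)"
      using A by auto
    then have [measurable]: "H \<in> sets M"
      using sets_F_subset by auto
    have \<rho>_H: "\<rho> j \<omega> = j" "\<rho> (Suc j) \<omega> = Suc j" if "\<omega> \<in> H" for \<omega>
      using that by (auto simp: H_def \<rho>_def)
    have \<rho>_not_H: "\<rho> (Suc j) \<omega> = \<rho> j \<omega>" if "\<omega> \<notin> H" "\<omega> \<in> A" for \<omega>
      using that \<tau>_le_\<sigma>[of \<omega>] by (auto simp: H_def \<rho>_def)
    have "(\<integral>\<^sup>+\<omega>. indicator A \<omega> * Y (\<rho> (Suc j) \<omega>) \<omega> \<partial>M)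
        = (\<integral>\<^sup>+\<omega>. indicator (A - H) \<omega> * Y (\<rho> j \<omega>) \<omega> + indicator H \<omega> * Y (Suc j) \<omega> \<partial>M)"
      using \<rho>_H \<rho>_not_H by (intro nn_integral_cong) (auto simp: indicator_def H_def)
    also have "\<dots> = (\<integral>\<^sup>+\<omega>. indicator (A - H) \<omega> * Y (\<rho> j \<omega>) \<omega> \<partial>M) + (\<integral>\<^sup>+\<omega>. indicator H \<omega> * Y (Suc j) \<omega> \<partial>M)"
      by (simp add: nn_integral_add)
    also have "\<dots> \<le> (\<integral>\<^sup>+\<omega>. indicator (A - H) \<omega> * Y (\<rho> j \<omega>) \<omega> \<partial>M) + (\<integral>\<^sup>+\<omega>. indicator H \<omega> * Y j \<omega> \<partial>M)"
      using supermartingale[OF H_F] by (rule add_left_mono)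
    also have "\<dots> = (\<integral>\<^sup>+\<omega>. indicator (A - H) \<omega> * Y (\<rho> j \<omega>) \<omega> + indicator H \<omega> * Y j \<omega> \<partial>M)"
      by (simp add: nn_integral_add)
    also have "\<dots> = (\<integral>\<^sup>+\<omega>. indicator A \<omega> * Y (\<rho> j \<omega>) \<omega> \<partial>M)"
      using \<rho>_H by (intro nn_integral_cong) (auto simp: indicator_def H_def)
    finally show ?thesis .
  qed
  have le_\<tau>: "(\<integral>\<^sup>+\<omega>. indicator A \<omega> * Y (\<rho> j \<omega>) \<omega> \<partial>M) \<le> (\<integral>\<^sup>+\<omega>. indicator A \<omega> * Y (\<tau> \<omega>) \<omega> \<partial>M)" for j
  proof (induction j)
    case 0
    then show ?case
      using \<tau>_le_\<sigma> by (simp add: \<rho>_def min_absorb2)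
  next
    case (Suc j)
    then show ?case
      using step order_trans by blast
  qed
  have "\<rho> N = \<sigma>"
    by (simp add: \<rho>_def fun_eq_iff min_absorb1 le_max_iff_disj \<sigma>_le)
  then show ?thesis
    using le_\<tau>[of N] by simp
qed

lemma stopping_time_hitting_time:
  assumes [measurable]: "\<And>k. Measurable.pred (F k) (P k)"
  shows "stopping_time F (hitting_time P N)"
proof
  fix t
  have [measurable]: "Measurable.pred (F t) (P k)" if "k \<in> {..t}" for k
    using that by (intro measurable_F_mono[OF assms]) simp
  have "Measurable.pred (F t) (\<lambda>\<omega>. \<exists>k\<in>{..t}. P k \<omega> \<or> k = N)"
    by measurable
  then show "Measurable.pred (F t) (\<lambda>\<omega>. hitting_time P N \<omega> \<le> t)"
    by (simp add: hitting_time_le_iff)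
qed

lemma sets_F_stopping_time_less_le:
  assumes "stopping_time F \<tau>"
  shows "{\<omega> \<in> space M. \<tau> \<omega> < N \<and> \<tau> \<omega> \<le> k} \<in> sets (F k)"
proof (cases "k < N")
  case True
  then have "{\<omega> \<in> space M. \<tau> \<omega> < N \<and> \<tau> \<omega> \<le> k} = {\<omega> \<in> space (F k). \<tau> \<omega> \<le> k}"
    by auto
  then show ?thesis
    using stopping_timeD[OF assms] by (simp add: pred_def)
next
  case False
  show ?thesis
  proof (cases N)
    case 0
    then show ?thesis by simp
  next
    case (Suc N')
    then have "{\<omega> \<in> space M. \<tau> \<omega> < N \<and> \<tau> \<omega> \<le> k} = {\<omega> \<in> space (F N'). \<tau> \<omega> \<le> N'}"
      using False by auto
    moreover have "{\<omega> \<in> space (F N'). \<tau> \<omega> \<le> N'} \<in> sets (F N')"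
      using stopping_timeD[OF assms] by (simp add: pred_def)
    ultimately show ?thesis
      using sets_F_mono[of N' k] False Suc by auto
  qed
qed

end

section \<open>The Robbins--Siegmund theorem\<close>

text \<open>The Robbins--Siegmund inequality without the factor \<open>1 + A\<^sub>n\<close> in front of \<open>V\<^sub>n\<close>;
  that factor is removed by normalisation in \<open>robbins_siegmund\<close>.\<close>

locale almost_supermartingale = filtered_prob_space +
  fixes V C D :: "nat \<Rightarrow> 'a \<Rightarrow> real"
  assumes measurable_V [measurable]: "\<And>n. V n \<in> borel_measurable (F n)"
    and measurable_C [measurable]: "\<And>n. C n \<in> borel_measurable (F n)"
    and measurable_D [measurable]: "\<And>n. D n \<in> borel_measurable (F n)"
    and V_nonneg: "\<And>n \<omega>. \<omega> \<in> space M \<Longrightarrow> 0 \<le> V n \<omega>"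
    and C_nonneg: "\<And>n \<omega>. \<omega> \<in> space M \<Longrightarrow> 0 \<le> C n \<omega>"
    and D_nonneg: "\<And>n \<omega>. \<omega> \<in> space M \<Longrightarrow> 0 \<le> D n \<omega>"
    and cond_exp_le: "\<And>n. AE \<omega> in M. nn_cond_exp M (F n) (\<lambda>\<omega>. ennreal (V (Suc n) \<omega>)) \<omega> + ennreal (D n \<omega>)
                          \<le> ennreal (V n \<omega> + C n \<omega>)"
begin

lemma borel_measurable_VCD [measurable]:
  "V n \<in> borel_measurable M" "C n \<in> borel_measurable M" "D n \<in> borel_measurable M"
  by (rule measurable_M_of_F, measurable)+

lemma nn_integral_step_le:
  assumes A [measurable]: "A \<in> sets (F n)"
  shows "(\<integral>\<^sup>+\<omega>. indicator A \<omega> * ennreal (V (Suc n) \<omega>) \<partial>M) + (\<integral>\<^sup>+\<omega>. indicator A \<omega> * ennreal (D n \<omega>) \<partial>M)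
      \<le> (\<integral>\<^sup>+\<omega>. indicator A \<omega> * ennreal (V n \<omega>) \<partial>M) + (\<integral>\<^sup>+\<omega>. indicator A \<omega> * ennreal (C n \<omega>) \<partial>M)"
proof -
  have [measurable]: "A \<in> sets M"
    using A by (rule sets_M_of_F)
  have "(\<integral>\<^sup>+\<omega>. indicator A \<omega> * ennreal (V (Suc n) \<omega>) \<partial>M) + (\<integral>\<^sup>+\<omega>. indicator A \<omega> * ennreal (D n \<omega>) \<partial>M)
      \<le> (\<integral>\<^sup>+\<omega>. indicator A \<omega> * ennreal (V n \<omega> + C n \<omega>) \<partial>M)"
    by (rule sigma_finite_subalgebra.nn_integral_indicator_le_of_cond_exp
        [OF sigma_finite_subalgebra_F _ _ _ cond_exp_le A]) auto
  also have "\<dots> = (\<integral>\<^sup>+\<omega>. indicator A \<omega> * ennreal (V n \<omega>) + indicator A \<omega> * ennreal (C n \<omega>) \<partial>M)"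
    by (intro nn_integral_cong) (auto simp: indicator_def V_nonneg C_nonneg ennreal_plus)
  also have "\<dots> = (\<integral>\<^sup>+\<omega>. indicator A \<omega> * ennreal (V n \<omega>) \<partial>M) + (\<integral>\<^sup>+\<omega>. indicator A \<omega> * ennreal (C n \<omega>) \<partial>M)"
    by (rule nn_integral_add) auto
  finally show ?thesis .
qed

lemma almost_supermartingale_restrict:
  assumes G [measurable]: "\<And>n. G n \<in> sets (F n)" and G_decr: "\<And>n. G (Suc n) \<subseteq> G n"
  shows "almost_supermartingale M F (\<lambda>n \<omega>. indicator (G n) \<omega> * V n \<omega>)
           (\<lambda>n \<omega>. indicator (G n) \<omega> * C n \<omega>) (\<lambda>n \<omega>. indicator (G n) \<omega> * D n \<omega>)"
proof unfold_locales
  fix n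
  have [measurable]: "G k \<in> sets M" for k
    using G by (rule sets_M_of_F)
  interpret F: sigma_finite_subalgebra M "F n"
    by (rule sigma_finite_subalgebra_F)
  have "AE \<omega> in M. nn_cond_exp M (F n) (\<lambda>\<omega>. ennreal (indicator (G (Suc n)) \<omega> * V (Suc n) \<omega>)) \<omega>
      \<le> nn_cond_exp M (F n) (\<lambda>\<omega>. indicator (G n) \<omega> * ennreal (V (Suc n) \<omega>)) \<omega>"
    using G_decr[of n] by (intro F.nn_cond_exp_mono) (auto simp: indicator_def)
  moreover have "AE \<omega> in M. indicator (G n) \<omega> * nn_cond_exp M (F n) (\<lambda>\<omega>. ennreal (V (Suc n) \<omega>)) \<omega>
      = nn_cond_exp M (F n) (\<lambda>\<omega>. indicator (G n) \<omega> * ennreal (V (Suc n) \<omega>)) \<omega>"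
    by (rule F.nn_cond_exp_prod) auto
  ultimately show "AE \<omega> in M. nn_cond_exp M (F n) (\<lambda>\<omega>. ennreal (indicator (G (Suc n)) \<omega> * V (Suc n) \<omega>)) \<omega>
      + ennreal (indicator (G n) \<omega> * D n \<omega>) \<le> ennreal (indicator (G n) \<omega> * V n \<omega> + indicator (G n) \<omega> * C n \<omega>)"
    using cond_exp_le[of n]
  proof eventually_elim
    case (elim \<omega>)
    show ?case
    proof (cases "\<omega> \<in> G n")
      case True
      then show ?thesis
        using elim order_trans[OF add_right_mono[OF elim(1)]] by simp
    next
      case False
      then show ?thesis
        using elim by simp
    qed
  qed
qed (use V_nonneg C_nonneg D_nonneg in auto)

end

locale bounded_almost_supermartingale = almost_supermartingale +
  fixes K :: real
  assumes summable_C: "\<And>\<omega>. \<omega> \<in> space M \<Longrightarrow> summable (\<lambda>n. C n \<omega>)"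
    and suminf_C_le: "\<And>\<omega>. \<omega> \<in> space M \<Longrightarrow> (\<Sum>n. C n \<omega>) \<le> K"
    and V_0_le: "\<And>\<omega>. \<omega> \<in> space M \<Longrightarrow> V 0 \<omega> \<le> K"
begin

definition C_tail :: "nat \<Rightarrow> 'a \<Rightarrow> real" where
  "C_tail k \<omega> = (\<Sum>j. C (j + k) \<omega>)"

lemma borel_measurable_C_tail [measurable]: "C_tail k \<in> borel_measurable M"
  unfolding C_tail_def by measurable

lemma C_tail_Suc: "\<omega> \<in> space M \<Longrightarrow> C_tail k \<omega> = C k \<omega> + C_tail (Suc k) \<omega>"
  using suminf_split_head[OF summable_ignore_initial_segment[OF summable_C, of \<omega> k]]
  by (simp add: C_tail_def)

lemma C_tail_nonneg: "\<omega> \<in> space M \<Longrightarrow> 0 \<le> C_tail k \<omega>"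
  unfolding C_tail_def
  by (intro suminf_nonneg summable_ignore_initial_segment summable_C C_nonneg)

lemma C_tail_antimono:
  assumes "\<omega> \<in> space M" "m \<le> k"
  shows "C_tail k \<omega> \<le> C_tail m \<omega>"
  using assms(2)
proof (induction k rule: dec_induct)
  case (step k)
  then show ?case
    using C_tail_Suc[OF assms(1), of k] C_nonneg[OF assms(1), of k] by linarith
qed simp

lemma C_tail_le: "\<omega> \<in> space M \<Longrightarrow> C_tail k \<omega> \<le> K"
  using C_tail_antimono[of \<omega> 0 k] suminf_C_le[of \<omega>] by (simp add: C_tail_def)

lemma C_tail_tendsto_zero: "\<omega> \<in> space M \<Longrightarrow> (\<lambda>k. C_tail k \<omega>) \<longlonglongrightarrow> 0"
  unfolding C_tail_def by (rule suminf_exist_split2[OF summable_C])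

lemma integral_C_tail_tendsto_zero: "(\<lambda>k. integral\<^sup>L M (C_tail k)) \<longlonglongrightarrow> 0"
proof -
  have "(\<lambda>k. integral\<^sup>L M (C_tail k)) \<longlonglongrightarrow> integral\<^sup>L M (\<lambda>_. 0)"
    by (rule integral_dominated_convergence[where w="\<lambda>_. K"])
      (auto simp: C_tail_nonneg C_tail_le C_tail_tendsto_zero)
  then show ?thesis
    by simp
qed

lemma integrable_C_tail: "integrable M (C_tail k)"
  by (rule integrable_const_bound[where B=K]) (auto simp: C_tail_nonneg C_tail_le)

definition V_plus_tail :: "nat \<Rightarrow> 'a \<Rightarrow> ennreal" where
  "V_plus_tail k \<omega> = ennreal (V k \<omega> + C_tail k \<omega>)"

lemma borel_measurable_V_plus_tail [measurable]: "V_plus_tail k \<in> borel_measurable M"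
  unfolding V_plus_tail_def by measurable

lemma nn_integral_V_plus_tail_step:
  assumes A: "A \<in> sets (F n)"
  shows "(\<integral>\<^sup>+\<omega>. indicator A \<omega> * V_plus_tail (Suc n) \<omega> \<partial>M) + (\<integral>\<^sup>+\<omega>. indicator A \<omega> * ennreal (D n \<omega>) \<partial>M)
      \<le> (\<integral>\<^sup>+\<omega>. indicator A \<omega> * V_plus_tail n \<omega> \<partial>M)"
proof -
  have [measurable]: "A \<in> sets M"
    using A by (rule sets_M_of_F)
  have split: "(\<integral>\<^sup>+\<omega>. indicator A \<omega> * V_plus_tail k \<omega> \<partial>M)
      = (\<integral>\<^sup>+\<omega>. indicator A \<omega> * ennreal (V k \<omega>) \<partial>M) + (\<integral>\<^sup>+\<omega>. indicator A \<omega> * ennreal (C_tail k \<omega>) \<partial>M)" for k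
    by (subst nn_integral_add[symmetric])
      (auto intro!: nn_integral_cong simp: V_plus_tail_def indicator_def V_nonneg C_tail_nonneg ennreal_plus)
  have tail: "(\<integral>\<^sup>+\<omega>. indicator A \<omega> * ennreal (C n \<omega>) \<partial>M) + (\<integral>\<^sup>+\<omega>. indicator A \<omega> * ennreal (C_tail (Suc n) \<omega>) \<partial>M)
      = (\<integral>\<^sup>+\<omega>. indicator A \<omega> * ennreal (C_tail n \<omega>) \<partial>M)"
    by (subst nn_integral_add[symmetric])
      (auto intro!: nn_integral_cong simp: indicator_def C_tail_Suc[of _ n] C_nonneg C_tail_nonneg ennreal_plus)
  have "(\<integral>\<^sup>+\<omega>. indicator A \<omega> * V_plus_tail (Suc n) \<omega> \<partial>M) + (\<integral>\<^sup>+\<omega>. indicator A \<omega> * ennreal (D n \<omega>) \<partial>M)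
      = ((\<integral>\<^sup>+\<omega>. indicator A \<omega> * ennreal (V (Suc n) \<omega>) \<partial>M) + (\<integral>\<^sup>+\<omega>. indicator A \<omega> * ennreal (D n \<omega>) \<partial>M))
        + (\<integral>\<^sup>+\<omega>. indicator A \<omega> * ennreal (C_tail (Suc n) \<omega>) \<partial>M)"
    by (simp add: split ac_simps)
  also have "\<dots> \<le> ((\<integral>\<^sup>+\<omega>. indicator A \<omega> * ennreal (V n \<omega>) \<partial>M) + (\<integral>\<^sup>+\<omega>. indicator A \<omega> * ennreal (C n \<omega>) \<partial>M))
        + (\<integral>\<^sup>+\<omega>. indicator A \<omega> * ennreal (C_tail (Suc n) \<omega>) \<partial>M)"
    using nn_integral_step_le[OF A] by (rule add_right_mono)
  also have "\<dots> = (\<integral>\<^sup>+\<omega>. indicator A \<omega> * V_plus_tail n \<omega> \<partial>M)"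
    by (simp add: split tail[symmetric] ac_simps)
  finally show ?thesis .
qed

lemma nn_integral_V_plus_tail_mono:
  "A \<in> sets (F n) \<Longrightarrow>
    (\<integral>\<^sup>+\<omega>. indicator A \<omega> * V_plus_tail (Suc n) \<omega> \<partial>M) \<le> (\<integral>\<^sup>+\<omega>. indicator A \<omega> * V_plus_tail n \<omega> \<partial>M)"
  using nn_integral_V_plus_tail_step by (rule order_trans[OF add_increasing2[OF zero_le order_refl]])

lemma sum_nn_integral_D_le: "(\<Sum>k<n. \<integral>\<^sup>+\<omega>. D k \<omega> \<partial>M) \<le> ennreal (2 * K)"
proof -
  have space_F: "space M \<in> sets (F n)" for n
    using sets.top[of "F n"] by simp
  have indicator_space: "(\<integral>\<^sup>+\<omega>. indicator (space M) \<omega> * f \<omega> \<partial>M) = (\<integral>\<^sup>+\<omega>. f \<omega> \<partial>M)" for f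
    by (rule nn_integral_cong) simp
  have step: "(\<integral>\<^sup>+\<omega>. V_plus_tail (Suc n) \<omega> \<partial>M) + (\<integral>\<^sup>+\<omega>. D n \<omega> \<partial>M) \<le> (\<integral>\<^sup>+\<omega>. V_plus_tail n \<omega> \<partial>M)" for n
    using nn_integral_V_plus_tail_step[OF space_F[of n]] unfolding indicator_space .
  have sum_le: "(\<integral>\<^sup>+\<omega>. V_plus_tail n \<omega> \<partial>M) + (\<Sum>k<n. \<integral>\<^sup>+\<omega>. D k \<omega> \<partial>M) \<le> (\<integral>\<^sup>+\<omega>. V_plus_tail 0 \<omega> \<partial>M)" for n
  proof (induction n)
    case (Suc n)
    have "(\<integral>\<^sup>+\<omega>. V_plus_tail (Suc n) \<omega> \<partial>M) + (\<Sum>k<Suc n. \<integral>\<^sup>+\<omega>. D k \<omega> \<partial>M)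
        = ((\<integral>\<^sup>+\<omega>. V_plus_tail (Suc n) \<omega> \<partial>M) + (\<integral>\<^sup>+\<omega>. D n \<omega> \<partial>M)) + (\<Sum>k<n. \<integral>\<^sup>+\<omega>. D k \<omega> \<partial>M)"
      by (simp add: ac_simps)
    also have "\<dots> \<le> (\<integral>\<^sup>+\<omega>. V_plus_tail n \<omega> \<partial>M) + (\<Sum>k<n. \<integral>\<^sup>+\<omega>. D k \<omega> \<partial>M)"
      using step by (rule add_right_mono)
    finally show ?case
      using Suc by (rule order_trans)
  qed simp
  have "V_plus_tail 0 \<omega> \<le> ennreal (2 * K)" if "\<omega> \<in> space M" for \<omega>
    using V_0_le[OF that] C_tail_le[OF that, of 0] by (simp add: V_plus_tail_def ennreal_leI)
  then have "(\<integral>\<^sup>+\<omega>. V_plus_tail 0 \<omega> \<partial>M) \<le> (\<integral>\<^sup>+\<omega>. ennreal (2 * K) \<partial>M)"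
    by (rule nn_integral_mono)
  also have "\<dots> = ennreal (2 * K)"
    by (simp add: emeasure_space_1)
  finally have V_plus_tail_0: "(\<integral>\<^sup>+\<omega>. V_plus_tail 0 \<omega> \<partial>M) \<le> ennreal (2 * K)" .
  have "(\<Sum>k<n. \<integral>\<^sup>+\<omega>. D k \<omega> \<partial>M) \<le> (\<integral>\<^sup>+\<omega>. V_plus_tail n \<omega> \<partial>M) + (\<Sum>k<n. \<integral>\<^sup>+\<omega>. D k \<omega> \<partial>M)"
    by (rule add_increasing) simp_all
  also note sum_le
  also note V_plus_tail_0
  finally show ?thesis .
qed

lemma AE_summable_D: "AE \<omega> in M. summable (\<lambda>n. D n \<omega>)"
proof -
  have "(\<Sum>k. \<integral>\<^sup>+\<omega>. D k \<omega> \<partial>M) \<le> ennreal (2 * K)"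
    using sum_nn_integral_D_le by (rule suminf_le_const[OF summableI])
  then have "(\<integral>\<^sup>+\<omega>. (\<Sum>k. ennreal (D k \<omega>)) \<partial>M) \<noteq> \<infinity>"
    by (subst nn_integral_suminf) (auto simp: top_unique)
  then have "AE \<omega> in M. (\<Sum>k. ennreal (D k \<omega>)) \<noteq> \<infinity>"
    by (intro nn_integral_noteq_infinite) auto
  then show ?thesis
    using AE_space by eventually_elim (auto intro: summable_suminf_not_top D_nonneg)
qed

lemma emeasure_crossing_before_le:
  fixes m N :: nat and \<eta> lam :: real
  defines "S \<equiv> {\<omega> \<in> space M. \<exists>i j. m \<le> i \<and> i \<le> j \<and> j < N \<and> V i \<omega> < \<eta> \<and> lam \<le> V j \<omega>}"
  assumes "0 \<le> \<eta>"
  shows "ennreal lam * emeasure M S \<le> ennreal (\<eta> + integral\<^sup>L M (C_tail m))"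
proof -
  define \<tau> where "\<tau> = hitting_time (\<lambda>k \<omega>. m \<le> k \<and> V k \<omega> < \<eta>) N"
  define \<sigma> where "\<sigma> = hitting_time (\<lambda>k \<omega>. \<tau> \<omega> \<le> k \<and> lam \<le> V k \<omega>) N"
  txt \<open>Integrating only over \<open>{\<tau> < N}\<close> avoids comparing the possibly infinite integrals
    of \<open>V_plus_tail N\<close> on the complement.\<close>
  define A where "A = {\<omega> \<in> space M. \<tau> \<omega> < N}"
  have \<tau>: "stopping_time F \<tau>"
    unfolding \<tau>_def by (rule stopping_time_hitting_time) measurable
  have [measurable]: "Measurable.pred (F k) (\<lambda>\<omega>. \<tau> \<omega> \<le> k)" for k
    using \<tau> by (rule stopping_timeD)
  have \<sigma>: "stopping_time F \<sigma>"
    unfolding \<sigma>_def by (rule stopping_time_hitting_time) measurable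
  have \<tau>_le_\<sigma>: "\<tau> \<omega> \<le> \<sigma> \<omega>" for \<omega>
    using hitting_time_hits[of _ N \<omega>] hitting_time_le_bound[of _ N \<omega>] unfolding \<sigma>_def
    by (metis (no_types, lifting) \<tau>_def le_neq_implies_less)
  have [measurable]: "A \<in> sets M"
    unfolding A_def using measurable_stopping_time_count_space[OF \<tau>] by measurable
  have [measurable]: "S \<in> sets M"
    unfolding S_def by measurable
  have "ennreal lam * emeasure M S = (\<integral>\<^sup>+\<omega>. ennreal lam * indicator S \<omega> \<partial>M)"
    by (simp add: nn_integral_cmult_indicator)
  also have "\<dots> \<le> (\<integral>\<^sup>+\<omega>. indicator A \<omega> * V_plus_tail (\<sigma> \<omega>) \<omega> \<partial>M)"
  proof (intro nn_integral_mono)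
    fix \<omega> assume \<omega>: "\<omega> \<in> space M"
    show "ennreal lam * indicator S \<omega> \<le> indicator A \<omega> * V_plus_tail (\<sigma> \<omega>) \<omega>"
    proof (cases "\<omega> \<in> S")
      case True
      then obtain i j where ij: "m \<le> i" "i \<le> j" "j < N" "V i \<omega> < \<eta>" "lam \<le> V j \<omega>"
        by (auto simp: S_def)
      then have "\<tau> \<omega> \<le> i"
        unfolding \<tau>_def by (intro hitting_time_le) simp
      then have "\<sigma> \<omega> \<le> j"
        unfolding \<sigma>_def using ij by (intro hitting_time_le) simp
      then have "lam \<le> V (\<sigma> \<omega>) \<omega>"
        using hitting_time_hits[of "\<lambda>k \<omega>. \<tau> \<omega> \<le> k \<and> lam \<le> V k \<omega>" N \<omega>] ij
        unfolding \<sigma>_def by simp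
      moreover have "\<omega> \<in> A"
        using \<open>\<tau> \<omega> \<le> i\<close> ij \<omega> unfolding A_def by simp
      ultimately show ?thesis
        using True \<omega> C_tail_nonneg[OF \<omega>, of "\<sigma> \<omega>"] by (simp add: V_plus_tail_def ennreal_leI)
    qed simp
  qed
  also have "\<dots> \<le> (\<integral>\<^sup>+\<omega>. indicator A \<omega> * V_plus_tail (\<tau> \<omega>) \<omega> \<partial>M)"
  proof (rule nn_integral_stopped_le[where Y=V_plus_tail, OF _ nn_integral_V_plus_tail_mono \<tau> \<sigma> \<tau>_le_\<sigma>])
    show "\<sigma> \<omega> \<le> N" for \<omega>
      unfolding \<sigma>_def by (rule hitting_time_le_bound)
    show "{\<omega> \<in> A. \<tau> \<omega> \<le> k} \<in> sets (F k)" for k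
      using sets_F_stopping_time_less_le[OF \<tau>, of N k] by (simp add: A_def conj_assoc)
  qed simp_all
  also have "\<dots> \<le> (\<integral>\<^sup>+\<omega>. ennreal (\<eta> + C_tail m \<omega>) \<partial>M)"
  proof (intro nn_integral_mono)
    fix \<omega> assume \<omega>: "\<omega> \<in> space M"
    show "indicator A \<omega> * V_plus_tail (\<tau> \<omega>) \<omega> \<le> ennreal (\<eta> + C_tail m \<omega>)"
    proof (cases "\<omega> \<in> A")
      case True
      then have "m \<le> \<tau> \<omega>" "V (\<tau> \<omega>) \<omega> < \<eta>"
        using hitting_time_hits[of _ N \<omega>] unfolding A_def \<tau>_def by auto
      then show ?thesis
        using True C_tail_antimono[OF \<omega> \<open>m \<le> \<tau> \<omega>\<close>] by (simp add: V_plus_tail_def ennreal_leI)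
    qed simp
  qed
  also have "\<dots> = ennreal (\<eta> + integral\<^sup>L M (C_tail m))"
    using integrable_C_tail C_tail_nonneg \<open>0 \<le> \<eta>\<close>
    by (subst nn_integral_eq_integral) (auto simp: prob_space)
  finally show ?thesis .
qed

lemma emeasure_crossing_le:
  assumes "0 \<le> \<eta>"
  shows "ennreal lam * emeasure M {\<omega> \<in> space M. \<exists>i\<ge>m. V i \<omega> < \<eta> \<and> (\<exists>j\<ge>i. lam \<le> V j \<omega>)}
    \<le> ennreal (\<eta> + integral\<^sup>L M (C_tail m))"
proof -
  define S where "S N = {\<omega> \<in> space M. \<exists>i j. m \<le> i \<and> i \<le> j \<and> j < N \<and> V i \<omega> < \<eta> \<and> lam \<le> V j \<omega>}" for N
  have [measurable]: "S N \<in> sets M" for N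
    unfolding S_def by measurable
  have "{\<omega> \<in> space M. \<exists>i\<ge>m. V i \<omega> < \<eta> \<and> (\<exists>j\<ge>i. lam \<le> V j \<omega>)} = (\<Union>N. S N)"
    by (auto simp: S_def)
  moreover have "incseq S"
    by (rule incseq_SucI) (force simp: S_def)
  ultimately have "ennreal lam * emeasure M {\<omega> \<in> space M. \<exists>i\<ge>m. V i \<omega> < \<eta> \<and> (\<exists>j\<ge>i. lam \<le> V j \<omega>)}
      = (SUP N. ennreal lam * emeasure M (S N))"
    using SUP_emeasure_incseq[of S M] by (simp add: image_subset_iff SUP_mult_left_ennreal[symmetric])
  also have "\<dots> \<le> ennreal (\<eta> + integral\<^sup>L M (C_tail m))"
    unfolding S_def using assms by (intro SUP_least emeasure_crossing_before_le) simp
  finally show ?thesis .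
qed

text \<open>The event \<open>liminf V = 0 \<and> limsup V \<ge> lam\<close>, with \<open>\<eta> = 1 / Suc r\<close> in the role of
  an arbitrary positive bound.\<close>

lemma null_sets_liminf_zero_limsup_ge:
  fixes lam :: real
  defines "E \<equiv> {\<omega> \<in> space M. \<forall>m. \<forall>r::nat. \<exists>i\<ge>m. V i \<omega> < 1 / Suc r \<and> (\<exists>j\<ge>i. lam \<le> V j \<omega>)}"
  assumes "0 < lam"
  shows "E \<in> null_sets M"
proof -
  have [measurable]: "E \<in> sets M"
    unfolding E_def by measurable
  have le_eps: "ennreal lam * emeasure M E \<le> ennreal e" if "0 < e" for e
  proof -
    obtain m where m: "integral\<^sup>L M (C_tail m) < e / 2"
      using order_tendstoD(2)[OF integral_C_tail_tendsto_zero, of "e / 2"] \<open>0 < e\<close>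
      by (auto simp: eventually_sequentially)
    obtain r :: nat where r: "1 / Suc r < e / 2"
      using reals_Archimedean[of "e / 2"] \<open>0 < e\<close> by (auto simp: inverse_eq_divide)
    have "E \<subseteq> {\<omega> \<in> space M. \<exists>i\<ge>m. V i \<omega> < 1 / Suc r \<and> (\<exists>j\<ge>i. lam \<le> V j \<omega>)}"
      by (auto simp: E_def)
    moreover have "{\<omega> \<in> space M. \<exists>i\<ge>m. V i \<omega> < 1 / Suc r \<and> (\<exists>j\<ge>i. lam \<le> V j \<omega>)} \<in> sets M"
      by measurable
    ultimately have "ennreal lam * emeasure M E
        \<le> ennreal lam * emeasure M {\<omega> \<in> space M. \<exists>i\<ge>m. V i \<omega> < 1 / Suc r \<and> (\<exists>j\<ge>i. lam \<le> V j \<omega>)}"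
      by (simp add: emeasure_mono mult_left_mono)
    also have "\<dots> \<le> ennreal (1 / Suc r + integral\<^sup>L M (C_tail m))"
      by (rule emeasure_crossing_le) simp
    also have "\<dots> \<le> ennreal e"
      using m r by (simp add: ennreal_leI)
    finally show ?thesis .
  qed
  have "ennreal lam * emeasure M E \<le> 0"
    by (rule ennreal_le_epsilon) (simp add: le_eps)
  then show ?thesis
    using \<open>0 < lam\<close> by (simp add: null_sets_def)
qed

lemma AE_liminf_zero_imp_tendsto_zero:
  "AE \<omega> in M. (\<forall>\<eta>>0. \<forall>m. \<exists>n\<ge>m. V n \<omega> < \<eta>) \<longrightarrow> (\<lambda>n. V n \<omega>) \<longlonglongrightarrow> 0"
proof -
  define E where "E lam = {\<omega> \<in> space M. \<forall>m. \<forall>r::nat. \<exists>i\<ge>m. V i \<omega> < 1 / Suc r \<and> (\<exists>j\<ge>i. lam \<le> V j \<omega>)}"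
    for lam
  have E_null: "E lam \<in> null_sets M" if "0 < lam" for lam
    unfolding E_def using that by (rule null_sets_liminf_zero_limsup_ge)
  have "AE \<omega> in M. \<forall>q::nat. \<omega> \<notin> E (1 / Suc q)"
    unfolding AE_all_countable by (intro allI AE_not_in E_null) simp
  then show ?thesis
    using AE_space
  proof eventually_elim
    case (elim \<omega>)
    show ?case
    proof (intro impI LIMSEQ_I)
      fix \<epsilon> :: real
      assume liminf: "\<forall>\<eta>>0. \<forall>m. \<exists>n\<ge>m. V n \<omega> < \<eta>" and "0 < \<epsilon>"
      obtain q :: nat where q: "1 / Suc q < \<epsilon>"
        using reals_Archimedean[OF \<open>0 < \<epsilon>\<close>] by (auto simp: inverse_eq_divide)
      have "\<not> (\<forall>m. \<forall>r::nat. \<exists>i\<ge>m. V i \<omega> < 1 / Suc r \<and> (\<exists>j\<ge>i. 1 / Suc q \<le> V j \<omega>))"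
        using elim(1)[rule_format, of q] elim(2) by (simp add: E_def)
      then obtain m r :: nat where "\<not> (\<exists>i\<ge>m. V i \<omega> < 1 / Suc r \<and> (\<exists>j\<ge>i. 1 / Suc q \<le> V j \<omega>))"
        by blast
      then have mr: "V j \<omega> < 1 / Suc q" if "m \<le> i" "V i \<omega> < 1 / Suc r" "i \<le> j" for i j
        using that not_le by blast
      obtain i where i: "m \<le> i" "V i \<omega> < 1 / Suc r"
        using liminf[rule_format, of "1 / Suc r" m] by auto
      have "norm (V j \<omega> - 0) < \<epsilon>" if "i \<le> j" for j
        using mr[OF i that] q V_nonneg[OF elim(2), of j] by simp
      then show "\<exists>i. \<forall>j\<ge>i. norm (V j \<omega> - 0) < \<epsilon>"
        by blast
    qed
  qed
qed

end

context almost_supermartingale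
begin

text \<open>Localisation: if \<open>\<Sum>n. C n \<omega>\<close> converges, then \<open>\<omega>\<close> lies in every \<open>bounded_event K n\<close>
  for all large \<open>K\<close>, and on these events the bounded case applies.\<close>

definition bounded_event :: "real \<Rightarrow> nat \<Rightarrow> 'a set" where
  "bounded_event K n = {\<omega> \<in> space M. V 0 \<omega> \<le> K \<and> (\<Sum>k\<le>n. C k \<omega>) \<le> K}"

lemma bounded_event_in_F: "bounded_event K n \<in> sets (F n)"
proof -
  have [measurable]: "V 0 \<in> borel_measurable (F n)"
    by (intro measurable_F_mono[OF measurable_V]) simp
  have [measurable]: "(\<lambda>\<omega>. \<Sum>k\<le>n. C k \<omega>) \<in> borel_measurable (F n)"
    by (intro borel_measurable_sum measurable_F_mono[OF measurable_C]) simp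
  have "bounded_event K n = {\<omega> \<in> space (F n). V 0 \<omega> \<le> K \<and> (\<Sum>k\<le>n. C k \<omega>) \<le> K}"
    by (simp add: bounded_event_def)
  also have "\<dots> \<in> sets (F n)"
    by measurable
  finally show ?thesis .
qed

lemma bounded_event_Suc_subset: "bounded_event K (Suc n) \<subseteq> bounded_event K n"
proof
  fix \<omega> assume "\<omega> \<in> bounded_event K (Suc n)"
  moreover from this have "(\<Sum>k\<le>n. C k \<omega>) \<le> (\<Sum>k\<le>Suc n. C k \<omega>)"
    using C_nonneg by (simp add: bounded_event_def)
  ultimately show "\<omega> \<in> bounded_event K n"
    by (simp add: bounded_event_def)
qed

lemma sum_indicator_bounded_event_C_le:
  assumes "0 \<le> K"
  shows "(\<Sum>n<N. indicator (bounded_event K n) \<omega> * C n \<omega>) \<le> K"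
proof (induction N)
  case 0
  show ?case
    using assms by simp
next
  case (Suc N)
  show ?case
  proof (cases "\<omega> \<in> bounded_event K N")
    case True
    have "decseq (bounded_event K)"
      using bounded_event_Suc_subset by (rule decseq_SucI)
    then have "\<omega> \<in> bounded_event K n" if "n \<le> N" for n
      using True decseqD that by blast
    then have "(\<Sum>n<Suc N. indicator (bounded_event K n) \<omega> * C n \<omega>) = (\<Sum>n\<le>N. C n \<omega>)"
      by (simp add: lessThan_Suc_atMost)
    also have "\<dots> \<le> K"
      using True by (simp add: bounded_event_def)
    finally show ?thesis .
  next
    case False
    then show ?thesis
      using Suc by simp
  qed
qed

lemma bounded_almost_supermartingale_restrict:
  assumes "0 \<le> K"
  shows "bounded_almost_supermartingale M F (\<lambda>n \<omega>. indicator (bounded_event K n) \<omega> * V n \<omega>)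
    (\<lambda>n \<omega>. indicator (bounded_event K n) \<omega> * C n \<omega>) (\<lambda>n \<omega>. indicator (bounded_event K n) \<omega> * D n \<omega>) K"
proof (intro bounded_almost_supermartingale.intro bounded_almost_supermartingale_axioms.intro)
  show "almost_supermartingale M F (\<lambda>n \<omega>. indicator (bounded_event K n) \<omega> * V n \<omega>)
    (\<lambda>n \<omega>. indicator (bounded_event K n) \<omega> * C n \<omega>) (\<lambda>n \<omega>. indicator (bounded_event K n) \<omega> * D n \<omega>)"
    by (rule almost_supermartingale_restrict[OF bounded_event_in_F bounded_event_Suc_subset])
  fix \<omega> assume "\<omega> \<in> space M"
  then have nonneg: "0 \<le> indicator (bounded_event K n) \<omega> * C n \<omega>" for n
    using C_nonneg by simp
  show summable: "summable (\<lambda>n. indicator (bounded_event K n) \<omega> * C n \<omega>)"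
    using nonneg sum_indicator_bounded_event_C_le[OF assms] by (rule summableI_nonneg_bounded)
  show "(\<Sum>n. indicator (bounded_event K n) \<omega> * C n \<omega>) \<le> K"
    using summable sum_indicator_bounded_event_C_le[OF assms] by (rule suminf_le_const)
  show "indicator (bounded_event K 0) \<omega> * V 0 \<omega> \<le> K"
    using assms by (simp add: bounded_event_def indicator_def)
qed

lemma AE_summable_D_and_tendsto_zero:
  assumes summable_C: "AE \<omega> in M. summable (\<lambda>n. C n \<omega>)"
  shows "AE \<omega> in M. summable (\<lambda>n. D n \<omega>) \<and>
    ((\<forall>\<eta>>0. \<forall>m. \<exists>n\<ge>m. V n \<omega> < \<eta>) \<longrightarrow> (\<lambda>n. V n \<omega>) \<longlonglongrightarrow> 0)"
proof -
  let ?restrict = "\<lambda>K X n \<omega>. indicator (bounded_event (real K) n) \<omega> * X n \<omega>"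
  note bounded = bounded_almost_supermartingale_restrict[OF of_nat_0_le_iff]
  have "AE \<omega> in M. \<forall>K::nat. summable (\<lambda>n. ?restrict K D n \<omega>) \<and>
    ((\<forall>\<eta>>0. \<forall>m. \<exists>n\<ge>m. ?restrict K V n \<omega> < \<eta>) \<longrightarrow> (\<lambda>n. ?restrict K V n \<omega>) \<longlonglongrightarrow> 0)"
    unfolding AE_all_countable AE_conj_iff
    using bounded_almost_supermartingale.AE_summable_D[OF bounded]
      bounded_almost_supermartingale.AE_liminf_zero_imp_tendsto_zero[OF bounded]
    by blast
  then show ?thesis
    using summable_C AE_space
  proof eventually_elim
    case (elim \<omega>)
    obtain K :: nat where K: "max (V 0 \<omega>) (\<Sum>n. C n \<omega>) \<le> K"
      using real_arch_simple by blast
    have "\<omega> \<in> bounded_event K n" for n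
      using K elim C_nonneg sum_le_suminf[of "\<lambda>n. C n \<omega>" "{..n}"] by (auto simp: bounded_event_def)
    then show ?case
      using elim(1)[rule_format, of K] by simp
  qed
qed

end

lemma prod_one_plus_le_exp_suminf:
  fixes a :: "nat \<Rightarrow> real"
  assumes "summable a" "\<And>k. 0 \<le> a k"
  shows "(\<Prod>k<n. 1 + a k) \<le> exp (\<Sum>k. a k)"
proof -
  have "(\<Prod>k<n. 1 + a k) \<le> (\<Prod>k<n. exp (a k))"
    using assms(2) exp_ge_add_one_self by (intro prod_mono) (auto simp: add_ac)
  also have "\<dots> = exp (\<Sum>k<n. a k)"
    by (simp add: exp_sum)
  also have "\<dots> \<le> exp (\<Sum>k. a k)"
    using assms by (simp add: sum_le_suminf)
  finally show ?thesis .
qed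

context filtered_prob_space
begin

lemma almost_supermartingale_divide_prod:
  fixes V A C D :: "nat \<Rightarrow> 'a \<Rightarrow> real"
  assumes [measurable]: "\<And>n. V n \<in> borel_measurable (F n)" "\<And>n. A n \<in> borel_measurable (F n)"
      "\<And>n. C n \<in> borel_measurable (F n)" "\<And>n. D n \<in> borel_measurable (F n)"
    and nonneg: "\<And>n \<omega>. \<omega> \<in> space M \<Longrightarrow> 0 \<le> V n \<omega> \<and> 0 \<le> A n \<omega> \<and> 0 \<le> C n \<omega> \<and> 0 \<le> D n \<omega>"
    and cond_exp_le: "\<And>n. AE \<omega> in M. nn_cond_exp M (F n) (\<lambda>\<omega>. ennreal (V (Suc n) \<omega>)) \<omega> + ennreal (D n \<omega>)
                          \<le> ennreal ((1 + A n \<omega>) * V n \<omega> + C n \<omega>)"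
  defines "P n \<omega> \<equiv> \<Prod>k<n. 1 + A k \<omega>"
  shows "almost_supermartingale M F (\<lambda>n \<omega>. V n \<omega> / P n \<omega>)
    (\<lambda>n \<omega>. C n \<omega> / P (Suc n) \<omega>) (\<lambda>n \<omega>. D n \<omega> / P (Suc n) \<omega>)"
proof -
  have [measurable]: "P k \<in> borel_measurable (F n)" if "k \<le> Suc n" for k n
    unfolding P_def using that
    by (intro borel_measurable_prod borel_measurable_add measurable_F_mono[OF assms(2)]) auto
  have P_ge_1: "1 \<le> P n \<omega>" if "\<omega> \<in> space M" for n \<omega>
    unfolding P_def using nonneg[OF that] by (intro prod_ge_1) auto
  have P_pos: "0 < P n \<omega>" if "\<omega> \<in> space M" for n \<omega>
    using P_ge_1[OF that, of n] by linarith
  show ?thesis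
  proof (intro almost_supermartingale.intro almost_supermartingale_axioms.intro)
    show "filtered_prob_space M F"
      by (rule filtered_prob_space_axioms)
    show "AE \<omega> in M. nn_cond_exp M (F n) (\<lambda>\<omega>. ennreal (V (Suc n) \<omega> / P (Suc n) \<omega>)) \<omega> + ennreal (D n \<omega> / P (Suc n) \<omega>)
        \<le> ennreal (V n \<omega> / P n \<omega> + C n \<omega> / P (Suc n) \<omega>)" for n
    proof -
      interpret sigma_finite_subalgebra M "F n"
        by (rule sigma_finite_subalgebra_F)
      define q where "q \<omega> = ennreal (1 / P (Suc n) \<omega>)" for \<omega>
      have [measurable]: "q \<in> borel_measurable (F n)"
        unfolding q_def by measurable
      have [measurable]: "V (Suc n) \<in> borel_measurable M"
        by (rule measurable_M_of_F[where n="Suc n"]) simp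
      have [measurable]: "q \<in> borel_measurable M" "P (Suc n) \<in> borel_measurable M"
        by (rule measurable_M_of_F[where n=n], simp)+
      have divide_eq: "ennreal (x / P (Suc n) \<omega>) = q \<omega> * ennreal x" if "0 \<le> x" "\<omega> \<in> space M" for x \<omega>
        using that P_pos[OF that(2), of "Suc n"] by (simp add: q_def ennreal_mult[symmetric])
      have "AE \<omega> in M. nn_cond_exp M (F n) (\<lambda>\<omega>. q \<omega> * ennreal (V (Suc n) \<omega>)) \<omega> + q \<omega> * ennreal (D n \<omega>)
          \<le> q \<omega> * ennreal ((1 + A n \<omega>) * V n \<omega> + C n \<omega>)"
        using cond_exp_le by (rule nn_cond_exp_mult_le) measurable
      moreover have "AE \<omega> in M. nn_cond_exp M (F n) (\<lambda>\<omega>. ennreal (V (Suc n) \<omega> / P (Suc n) \<omega>)) \<omega>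
          = nn_cond_exp M (F n) (\<lambda>\<omega>. q \<omega> * ennreal (V (Suc n) \<omega>)) \<omega>"
        using nonneg by (intro nn_cond_exp_cong AE_I2) (auto simp: divide_eq)
      ultimately show ?thesis
        using AE_space
      proof eventually_elim
        case (elim \<omega>)
        note nonneg = nonneg[OF elim(3), of n]
        have "nn_cond_exp M (F n) (\<lambda>\<omega>. ennreal (V (Suc n) \<omega> / P (Suc n) \<omega>)) \<omega> + ennreal (D n \<omega> / P (Suc n) \<omega>)
            = nn_cond_exp M (F n) (\<lambda>\<omega>. q \<omega> * ennreal (V (Suc n) \<omega>)) \<omega> + q \<omega> * ennreal (D n \<omega>)"
          using elim(2,3) nonneg by (simp add: divide_eq)
        also have "\<dots> \<le> q \<omega> * ennreal ((1 + A n \<omega>) * V n \<omega> + C n \<omega>)"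
          by (rule elim(1))
        also have "\<dots> = ennreal (((1 + A n \<omega>) * V n \<omega> + C n \<omega>) / P (Suc n) \<omega>)"
          using elim(3) nonneg by (simp add: divide_eq)
        also have "((1 + A n \<omega>) * V n \<omega> + C n \<omega>) / P (Suc n) \<omega> = V n \<omega> / P n \<omega> + C n \<omega> / P (Suc n) \<omega>"
        proof -
          have "(b * v + c) / (p * b) = v / p + c / (p * b)" if "0 < p" "0 < b" for p b v c :: real
            using that by (simp add: field_simps)
          moreover have "P (Suc n) \<omega> = P n \<omega> * (1 + A n \<omega>)"
            by (simp add: P_def)
          ultimately show ?thesis
            using P_pos[OF elim(3), of n] nonneg by simp
        qed
        finally show ?case .
      qed
    qed
  qed (auto intro!: divide_nonneg_pos simp: nonneg P_pos)
qed

theorem robbins_siegmund: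
  fixes V A C D :: "nat \<Rightarrow> 'a \<Rightarrow> real"
  assumes measurable: "\<And>n. V n \<in> borel_measurable (F n)" "\<And>n. A n \<in> borel_measurable (F n)"
      "\<And>n. C n \<in> borel_measurable (F n)" "\<And>n. D n \<in> borel_measurable (F n)"
    and nonneg: "\<And>n \<omega>. \<omega> \<in> space M \<Longrightarrow> 0 \<le> V n \<omega> \<and> 0 \<le> A n \<omega> \<and> 0 \<le> C n \<omega> \<and> 0 \<le> D n \<omega>"
    and cond_exp_le: "\<And>n. AE \<omega> in M. nn_cond_exp M (F n) (\<lambda>\<omega>. ennreal (V (Suc n) \<omega>)) \<omega> + ennreal (D n \<omega>)
                          \<le> ennreal ((1 + A n \<omega>) * V n \<omega> + C n \<omega>)"
    and summable_A: "AE \<omega> in M. summable (\<lambda>n. A n \<omega>)"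
    and summable_C: "AE \<omega> in M. summable (\<lambda>n. C n \<omega>)"
  shows "AE \<omega> in M. summable (\<lambda>n. D n \<omega>) \<and>
    ((\<forall>\<eta>>0. \<forall>m. \<exists>n\<ge>m. V n \<omega> < \<eta>) \<longrightarrow> (\<lambda>n. V n \<omega>) \<longlonglongrightarrow> 0)"
proof -
  define P where "P n \<omega> = (\<Prod>k<n. 1 + A k \<omega>)" for n \<omega>
  interpret normalized: almost_supermartingale M F "\<lambda>n \<omega>. V n \<omega> / P n \<omega>"
      "\<lambda>n \<omega>. C n \<omega> / P (Suc n) \<omega>" "\<lambda>n \<omega>. D n \<omega> / P (Suc n) \<omega>"
    unfolding P_def using measurable nonneg cond_exp_le by (rule almost_supermartingale_divide_prod)
  have P_ge_1: "1 \<le> P n \<omega>" if "\<omega> \<in> space M" for n \<omega>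
    unfolding P_def using nonneg[OF that] by (intro prod_ge_1) auto
  have "AE \<omega> in M. summable (\<lambda>n. C n \<omega> / P (Suc n) \<omega>)"
    using summable_C AE_space
  proof eventually_elim
    case (elim \<omega>)
    show ?case
    proof (rule summable_comparison_test'[OF elim(1)])
      show "norm (C n \<omega> / P (Suc n) \<omega>) \<le> C n \<omega>" for n
        using nonneg[OF elim(2), of n] P_ge_1[OF elim(2), of "Suc n"]
        by (simp add: divide_le_eq mult_le_cancel_left1)
    qed
  qed
  then have "AE \<omega> in M. summable (\<lambda>n. D n \<omega> / P (Suc n) \<omega>) \<and>
      ((\<forall>\<eta>>0. \<forall>m. \<exists>n\<ge>m. V n \<omega> / P n \<omega> < \<eta>) \<longrightarrow> (\<lambda>n. V n \<omega> / P n \<omega>) \<longlonglongrightarrow> 0)"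
    by (rule normalized.AE_summable_D_and_tendsto_zero)
  then show ?thesis
    using summable_A AE_space
  proof eventually_elim
    case (elim \<omega>)
    define S where "S = exp (\<Sum>n. A n \<omega>)"
    have P_le: "P n \<omega> \<le> S" for n
      unfolding P_def S_def using elim(2) nonneg[OF elim(3)] by (intro prod_one_plus_le_exp_suminf) auto
    have le_S_times: "x \<le> S * (x / P n \<omega>)" if "0 \<le> x" for x n
    proof -
      have "x = x / P n \<omega> * P n \<omega>"
        using P_ge_1[OF elim(3), of n] by simp
      also have "\<dots> \<le> x / P n \<omega> * S"
        using P_le[of n] P_ge_1[OF elim(3), of n] that by (intro mult_left_mono) simp_all
      finally show ?thesis
        by (simp add: mult.commute)
    qed
    have "summable (\<lambda>n. D n \<omega>)"
    proof (rule summable_comparison_test'[OF summable_mult[OF conjunct1[OF elim(1)], of S]])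
      show "norm (D n \<omega>) \<le> S * (D n \<omega> / P (Suc n) \<omega>)" for n
        using le_S_times nonneg[OF elim(3), of n] by simp
    qed
    moreover have "(\<lambda>n. V n \<omega>) \<longlonglongrightarrow> 0" if liminf: "\<forall>\<eta>>0. \<forall>m. \<exists>n\<ge>m. V n \<omega> < \<eta>"
    proof -
      have "V n \<omega> / P n \<omega> \<le> V n \<omega>" for n
        using nonneg[OF elim(3), of n] P_ge_1[OF elim(3), of n]
        by (simp add: divide_le_eq mult_le_cancel_left1)
      then have "\<forall>\<eta>>0. \<forall>m. \<exists>n\<ge>m. V n \<omega> / P n \<omega> < \<eta>"
        using liminf le_less_trans by blast
      then have "(\<lambda>n. V n \<omega> / P n \<omega>) \<longlonglongrightarrow> 0"
        using elim(1) by blast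
      then have "(\<lambda>n. S * (V n \<omega> / P n \<omega>)) \<longlonglongrightarrow> 0"
        by (rule tendsto_mult_right_zero)
      moreover have "\<forall>\<^sub>F n in sequentially. norm (V n \<omega>) \<le> S * (V n \<omega> / P n \<omega>)"
        using le_S_times nonneg[OF elim(3)] by (intro always_eventually) simp
      ultimately show ?thesis
        by (rule Lim_null_comparison[rotated])
    qed
    ultimately show ?case
      by blast
  qed
qed

end

section \<open>The squared distance to \<open>[0, B]\<close>\<close>

lemma excess_sq_le:
  fixes z z' B :: real
  shows "(max (z' - B) 0)\<^sup>2 \<le> (max (z - B) 0)\<^sup>2 + 2 * max (z - B) 0 * (z' - z) + (z' - z)\<^sup>2"
proof (cases "B < z")
  case True
  have "(max (z' - B) 0)\<^sup>2 \<le> (z' - B)\<^sup>2"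
    by (cases "B \<le> z'") (auto simp: max_def)
  also have "\<dots> = (z - B)\<^sup>2 + 2 * (z - B) * (z' - z) + (z' - z)\<^sup>2"
    by (simp add: power2_eq_square algebra_simps)
  finally show ?thesis
    using True by simp
next
  case False
  have "(max (z' - B) 0)\<^sup>2 \<le> (z' - z)\<^sup>2"
  proof (cases "B \<le> z'")
    case True
    then have "(z' - B)\<^sup>2 \<le> (z' - z)\<^sup>2"
      using False by (intro power_mono) auto
    then show ?thesis
      using True by (simp add: max_def)
  qed (simp add: max_def)
  then show ?thesis
    using False by simp
qed

text \<open>\<open>r1\<close> and \<open>r2\<close> stand for the conditional expectations of \<open>(max (z\<^sub>n\<^sub>+\<^sub>1 - B) 0)\<^sup>2\<close>
  and of \<open>z\<^sub>n\<^sub>+\<^sub>1\<close> given \<open>F\<^sub>n\<close>.\<close>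

lemma excess_sq_drift:
  fixes z a x y b c B r1 r2 :: real
  defines "s \<equiv> max (z - B) 0"
  assumes nonneg: "0 \<le> z" "0 \<le> a" "0 \<le> B"
    and next_sq: "r1 + 2 * s * z \<le> s\<^sup>2 + b\<^sup>2 * (z + 1)\<^sup>2 + 2 * s * r2"
    and next_z: "r2 + y \<le> (1 + a) * z + x"
    and drift: "B < z \<Longrightarrow> x - y \<le> - c * (z - B)"
  shows "r1 + 2 * c * s\<^sup>2 \<le> (1 + ((2 + B) * a + 2 * b\<^sup>2)) * s\<^sup>2 + (a * B + 2 * b\<^sup>2 * (B + 1)\<^sup>2)"
proof (cases "B < z")
  case False
  then have "s = 0"
    by (simp add: s_def)
  have "b\<^sup>2 * (z + 1)\<^sup>2 \<le> b\<^sup>2 * (B + 1)\<^sup>2"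
    using False nonneg by (intro mult_left_mono power_mono) auto
  moreover have "0 \<le> a * B" "0 \<le> b\<^sup>2 * (B + 1)\<^sup>2"
    using nonneg by simp_all
  moreover have "r1 \<le> b\<^sup>2 * (z + 1)\<^sup>2"
    using next_sq \<open>s = 0\<close> by simp
  ultimately have "r1 \<le> a * B + 2 * b\<^sup>2 * (B + 1)\<^sup>2"
    by linarith
  then show ?thesis
    using \<open>s = 0\<close> by simp
next
  case True
  then have s: "s = z - B" "0 < s"
    by (auto simp: s_def)
  have "s * r2 \<le> s * ((1 + a) * z - c * s)"
    using next_z drift[OF True] s by (intro mult_left_mono) auto
  moreover have "2 * a * s * z \<le> (2 + B) * a * s\<^sup>2 + a * B"
  proof -
    have "0 \<le> B * (s - 1)\<^sup>2"
      using nonneg by simp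
    moreover have "z = B + s"
      using s by simp
    ultimately have "2 * s * z \<le> (2 + B) * s\<^sup>2 + B"
      by (simp add: power2_eq_square algebra_simps)
    then have "a * (2 * s * z) \<le> a * ((2 + B) * s\<^sup>2 + B)"
      using nonneg by (intro mult_left_mono) auto
    then show ?thesis
      by (simp add: algebra_simps)
  qed
  moreover have "b\<^sup>2 * (z + 1)\<^sup>2 \<le> 2 * b\<^sup>2 * s\<^sup>2 + 2 * b\<^sup>2 * (B + 1)\<^sup>2"
  proof -
    have "0 \<le> (s - (B + 1))\<^sup>2"
      by simp
    moreover have "z = B + s"
      using s by simp
    ultimately have "(z + 1)\<^sup>2 \<le> 2 * s\<^sup>2 + 2 * (B + 1)\<^sup>2"
      by (simp add: power2_eq_square algebra_simps)
    then have "b\<^sup>2 * (z + 1)\<^sup>2 \<le> b\<^sup>2 * (2 * s\<^sup>2 + 2 * (B + 1)\<^sup>2)"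
      by (intro mult_left_mono) auto
    then show ?thesis
      by (simp add: algebra_simps)
  qed
  ultimately show ?thesis
    using next_sq by (simp add: power2_eq_square algebra_simps)
qed

lemma ennreal_add_le_ennrealE:
  assumes "e + ennreal p \<le> ennreal q" "0 \<le> p" "0 \<le> q"
  obtains r where "0 \<le> r" "e = ennreal r" "r + p \<le> q"
proof (cases e rule: ennreal_cases)
  case (real r)
  then show ?thesis
    using assms by (intro that[of r]) (auto simp: ennreal_plus[symmetric] simp del: ennreal_plus)
next
  case top
  then show ?thesis
    using assms by (simp add: top_unique)
qed

lemma not_summable_imp_frequently_less:
  fixes c u :: "nat \<Rightarrow> real"
  assumes "\<not> summable c" "summable (\<lambda>n. c n * u n)" "\<And>n. 0 \<le> c n"
  shows "\<forall>\<eta>>0. \<forall>m. \<exists>n\<ge>m. u n < \<eta>"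
proof (rule ccontr)
  assume "\<not> (\<forall>\<eta>>0. \<forall>m. \<exists>n\<ge>m. u n < \<eta>)"
  then obtain \<eta> m where "0 < \<eta>" and large: "\<And>n. m \<le> n \<Longrightarrow> \<eta> \<le> u n"
    by (auto simp: not_less)
  have "summable c"
  proof (rule summable_comparison_test'[OF summable_mult[OF assms(2), of "1 / \<eta>"]])
    show "norm (c n) \<le> 1 / \<eta> * (c n * u n)" if "m \<le> n" for n
      using mult_left_mono[OF large[OF that] assms(3)] \<open>0 < \<eta>\<close> assms(3)[of n]
      by (simp add: field_simps)
  qed
  then show False
    using assms(1) by contradiction
qed

lemma tendsto_infdist_Icc_zero:
  fixes z :: "nat \<Rightarrow> real"
  assumes "(\<lambda>n. (max (z n - B) 0)\<^sup>2) \<longlonglongrightarrow> 0" "\<And>n. 0 \<le> z n" "0 \<le> B"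
  shows "(\<lambda>n. infdist (z n) {0..B}) \<longlonglongrightarrow> 0"
proof (rule Lim_null_comparison)
  have "(\<lambda>n. sqrt ((max (z n - B) 0)\<^sup>2)) \<longlonglongrightarrow> sqrt 0"
    using assms(1) by (rule tendsto_real_sqrt)
  then show "(\<lambda>n. max (z n - B) 0) \<longlonglongrightarrow> 0"
    by simp
  have "infdist (z n) {0..B} \<le> max (z n - B) 0" for n
  proof -
    have "infdist (z n) {0..B} \<le> dist (z n) (min (z n) B)"
      using assms(2,3) by (intro infdist_le) auto
    also have "\<dots> = max (z n - B) 0"
      by (simp add: dist_real_def min_def max_def)
    finally show ?thesis .
  qed
  then show "\<forall>\<^sub>F n in sequentially. norm (infdist (z n) {0..B}) \<le> max (z n - B) 0"
    by (intro always_eventually) (simp add: infdist_nonneg)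
qed

lemma (in sigma_finite_subalgebra) AE_cond_exp_excess_sq_le:
  fixes z z' a x y b c :: "'a \<Rightarrow> real" and B :: real
  defines "s \<omega> \<equiv> max (z \<omega> - B) 0"
  assumes [measurable]: "z \<in> borel_measurable F" "b \<in> borel_measurable F" "z' \<in> borel_measurable M"
    and nonneg: "\<And>\<omega>. \<omega> \<in> space M \<Longrightarrow> 0 \<le> z \<omega> \<and> 0 \<le> z' \<omega> \<and> 0 \<le> a \<omega> \<and> 0 \<le> x \<omega> \<and> 0 \<le> y \<omega> \<and> 0 \<le> c \<omega>"
    and cond_exp_le: "AE \<omega> in M. nn_cond_exp M F (\<lambda>\<omega>. ennreal (z' \<omega>)) \<omega> + ennreal (y \<omega>)
                          \<le> ennreal ((1 + a \<omega>) * z \<omega> + x \<omega>)"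
    and increment: "AE \<omega> in M. \<bar>z' \<omega> - z \<omega>\<bar> \<le> b \<omega> * (z \<omega> + 1)"
    and "0 \<le> B"
    and drift: "\<And>\<omega>. \<omega> \<in> space M \<Longrightarrow> B < z \<omega> \<Longrightarrow> x \<omega> - y \<omega> \<le> - c \<omega> * (z \<omega> - B)"
  shows "AE \<omega> in M. nn_cond_exp M F (\<lambda>\<omega>. ennreal ((max (z' \<omega> - B) 0)\<^sup>2)) \<omega> + ennreal (2 * c \<omega> * (s \<omega>)\<^sup>2)
    \<le> ennreal ((1 + ((2 + B) * a \<omega> + 2 * (b \<omega>)\<^sup>2)) * (s \<omega>)\<^sup>2 + (a \<omega> * B + 2 * (b \<omega>)\<^sup>2 * (B + 1)\<^sup>2))"
proof -
  have [measurable]: "s \<in> borel_measurable F"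
    unfolding s_def by measurable
  have s_nonneg: "0 \<le> s \<omega>" for \<omega>
    by (simp add: s_def)
  have "AE \<omega> in M. ennreal ((max (z' \<omega> - B) 0)\<^sup>2) + ennreal (2 * s \<omega> * z \<omega>)
      \<le> ennreal ((s \<omega>)\<^sup>2 + (b \<omega>)\<^sup>2 * (z \<omega> + 1)\<^sup>2) + ennreal (2 * s \<omega>) * ennreal (z' \<omega>)"
    using increment AE_space
  proof eventually_elim
    case (elim \<omega>)
    have "(z' \<omega> - z \<omega>)\<^sup>2 \<le> (b \<omega>)\<^sup>2 * (z \<omega> + 1)\<^sup>2"
      using power_mono[OF elim(1), of 2] by (simp add: power_mult_distrib)
    moreover have "2 * s \<omega> * (z' \<omega> - z \<omega>) = 2 * s \<omega> * z' \<omega> - 2 * s \<omega> * z \<omega>"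
      by (simp add: algebra_simps)
    ultimately have "(max (z' \<omega> - B) 0)\<^sup>2 + 2 * s \<omega> * z \<omega> \<le> (s \<omega>)\<^sup>2 + (b \<omega>)\<^sup>2 * (z \<omega> + 1)\<^sup>2 + 2 * s \<omega> * z' \<omega>"
      using excess_sq_le[where z="z \<omega>" and z'="z' \<omega>" and B=B] unfolding s_def by linarith
    then show ?case
      using nonneg[OF elim(2)] s_nonneg[of \<omega>]
      by (simp add: ennreal_plus[symmetric] ennreal_mult[symmetric] ennreal_leI del: ennreal_plus)
  qed
  then have "AE \<omega> in M. nn_cond_exp M F (\<lambda>\<omega>. ennreal ((max (z' \<omega> - B) 0)\<^sup>2)) \<omega> + ennreal (2 * s \<omega> * z \<omega>)
      \<le> ennreal ((s \<omega>)\<^sup>2 + (b \<omega>)\<^sup>2 * (z \<omega> + 1)\<^sup>2) + ennreal (2 * s \<omega>) * nn_cond_exp M F (\<lambda>\<omega>. ennreal (z' \<omega>)) \<omega>"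
    by (rule nn_cond_exp_add_le_affine) measurable
  then show ?thesis
    using cond_exp_le AE_space
  proof eventually_elim
    case (elim \<omega>)
    note nonneg = nonneg[OF elim(3)] s_nonneg[of \<omega>]
    obtain r2 where r2: "0 \<le> r2" "nn_cond_exp M F (\<lambda>\<omega>. ennreal (z' \<omega>)) \<omega> = ennreal r2"
        "r2 + y \<omega> \<le> (1 + a \<omega>) * z \<omega> + x \<omega>"
      using elim(2) nonneg by (elim ennreal_add_le_ennrealE) auto
    have "nn_cond_exp M F (\<lambda>\<omega>. ennreal ((max (z' \<omega> - B) 0)\<^sup>2)) \<omega> + ennreal (2 * s \<omega> * z \<omega>)
        \<le> ennreal ((s \<omega>)\<^sup>2 + (b \<omega>)\<^sup>2 * (z \<omega> + 1)\<^sup>2 + 2 * s \<omega> * r2)"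
      using elim(1) r2 nonneg
      by (simp add: ennreal_plus[symmetric] ennreal_mult[symmetric] del: ennreal_plus)
    then obtain r1 where r1: "0 \<le> r1" "nn_cond_exp M F (\<lambda>\<omega>. ennreal ((max (z' \<omega> - B) 0)\<^sup>2)) \<omega> = ennreal r1"
        "r1 + 2 * s \<omega> * z \<omega> \<le> (s \<omega>)\<^sup>2 + (b \<omega>)\<^sup>2 * (z \<omega> + 1)\<^sup>2 + 2 * s \<omega> * r2"
      using nonneg r2(1) by (elim ennreal_add_le_ennrealE) auto
    have "r1 + 2 * c \<omega> * (s \<omega>)\<^sup>2
        \<le> (1 + ((2 + B) * a \<omega> + 2 * (b \<omega>)\<^sup>2)) * (s \<omega>)\<^sup>2 + (a \<omega> * B + 2 * (b \<omega>)\<^sup>2 * (B + 1)\<^sup>2)"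
      using excess_sq_drift[where z="z \<omega>" and a="a \<omega>" and x="x \<omega>" and y="y \<omega>" and c="c \<omega>" and b="b \<omega>"] r1 r2 nonneg
        \<open>0 \<le> B\<close> drift[OF elim(3)]
      by (simp add: s_def)
    then show ?case
      using r1 nonneg by (simp add: ennreal_plus[symmetric] ennreal_leI del: ennreal_plus)
  qed
qed

theorem theorem2:
  fixes M :: "'w measure" and F :: "nat \<Rightarrow> 'w measure"
    and z a x y b c :: "nat \<Rightarrow> 'w \<Rightarrow> real" and B :: real
  assumes prob: "prob_space M"
    and subalg: "\<And>n. subalgebra M (F n)"
    and filt_mono: "\<And>n m. n \<le> m \<Longrightarrow> sets (F n) \<subseteq> sets (F m)"
    and adapted: "\<And>n. z n \<in> borel_measurable (F n)" "\<And>n. a n \<in> borel_measurable (F n)"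
                 "\<And>n. x n \<in> borel_measurable (F n)" "\<And>n. y n \<in> borel_measurable (F n)"
                 "\<And>n. b n \<in> borel_measurable (F n)" "\<And>n. c n \<in> borel_measurable (F n)"
    and nonneg: "\<And>n \<omega>. \<omega> \<in> space M \<Longrightarrow> z n \<omega> \<ge> 0 \<and> a n \<omega> \<ge> 0 \<and> x n \<omega> \<ge> 0 \<and> y n \<omega> \<ge> 0
                    \<and> b n \<omega> \<ge> 0 \<and> c n \<omega> \<ge> 0"
    and cond: "\<And>n. AE \<omega> in M. nn_cond_exp M (F n) (\<lambda>\<omega>. ennreal (z (Suc n) \<omega>)) \<omega> + ennreal (y n \<omega>)
                   \<le> ennreal ((1 + a n \<omega>) * z n \<omega> + x n \<omega>)"
    and A1: "AE \<omega> in M. summable (\<lambda>n. a n \<omega>)"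
    and A2: "\<And>n. AE \<omega> in M. \<bar>z (Suc n) \<omega> - z n \<omega>\<bar> \<le> b n \<omega> * (z n \<omega> + 1)"
    and A2b: "AE \<omega> in M. summable (\<lambda>n. (b n \<omega>)\<^sup>2)"
    and A3: "B \<ge> 0"
    and A3b: "\<And>n \<omega>. \<omega> \<in> space M \<Longrightarrow> z n \<omega> > B \<Longrightarrow> x n \<omega> - y n \<omega> \<le> - c n \<omega> * (z n \<omega> - B)"
    and A3c: "AE \<omega> in M. \<not> summable (\<lambda>n. c n \<omega>)"
  shows "AE \<omega> in M. (\<lambda>n. infdist (z n \<omega>) {0..B}) \<longlonglongrightarrow> 0"
proof -
  interpret filtered_prob_space M F
    using prob subalg filt_mono by (intro filtered_prob_space.intro filtered_prob_space_axioms.intro)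
  define s where "s n \<omega> = max (z n \<omega> - B) 0" for n \<omega>
  note [measurable] = adapted
  have [measurable]: "z n \<in> borel_measurable M" for n
    by (rule measurable_M_of_F) (rule adapted)
  have drift: "AE \<omega> in M. nn_cond_exp M (F n) (\<lambda>\<omega>. ennreal ((s (Suc n) \<omega>)\<^sup>2)) \<omega> + ennreal (2 * c n \<omega> * (s n \<omega>)\<^sup>2)
      \<le> ennreal ((1 + ((2 + B) * a n \<omega> + 2 * (b n \<omega>)\<^sup>2)) * (s n \<omega>)\<^sup>2 + (a n \<omega> * B + 2 * (b n \<omega>)\<^sup>2 * (B + 1)\<^sup>2))"
    for n
    unfolding s_def
    by (rule sigma_finite_subalgebra.AE_cond_exp_excess_sq_le[OF sigma_finite_subalgebra_F _ _ _ _ cond A2 A3 A3b])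
      (use nonneg in auto)
  have "AE \<omega> in M. summable (\<lambda>n. 2 * c n \<omega> * (s n \<omega>)\<^sup>2) \<and>
      ((\<forall>\<eta>>0. \<forall>m. \<exists>n\<ge>m. (s n \<omega>)\<^sup>2 < \<eta>) \<longrightarrow> (\<lambda>n. (s n \<omega>)\<^sup>2) \<longlonglongrightarrow> 0)"
  proof (rule robbins_siegmund[OF _ _ _ _ _ drift])
    show "(\<lambda>\<omega>. (s n \<omega>)\<^sup>2) \<in> borel_measurable (F n)"
      "(\<lambda>\<omega>. (2 + B) * a n \<omega> + 2 * (b n \<omega>)\<^sup>2) \<in> borel_measurable (F n)"
      "(\<lambda>\<omega>. a n \<omega> * B + 2 * (b n \<omega>)\<^sup>2 * (B + 1)\<^sup>2) \<in> borel_measurable (F n)"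
      "(\<lambda>\<omega>. 2 * c n \<omega> * (s n \<omega>)\<^sup>2) \<in> borel_measurable (F n)" for n
      unfolding s_def by measurable
    show "0 \<le> (s n \<omega>)\<^sup>2 \<and> 0 \<le> (2 + B) * a n \<omega> + 2 * (b n \<omega>)\<^sup>2 \<and>
        0 \<le> a n \<omega> * B + 2 * (b n \<omega>)\<^sup>2 * (B + 1)\<^sup>2 \<and> 0 \<le> 2 * c n \<omega> * (s n \<omega>)\<^sup>2"
      if "\<omega> \<in> space M" for n \<omega>
      using nonneg[OF that, of n] A3 by simp
    show "AE \<omega> in M. summable (\<lambda>n. (2 + B) * a n \<omega> + 2 * (b n \<omega>)\<^sup>2)"
      using A1 A2b by eventually_elim (intro summable_add summable_mult)
    show "AE \<omega> in M. summable (\<lambda>n. a n \<omega> * B + 2 * (b n \<omega>)\<^sup>2 * (B + 1)\<^sup>2)"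
      using A1 A2b by eventually_elim (intro summable_add summable_mult2 summable_mult)
  qed
  then show ?thesis
    using A3c AE_space
  proof eventually_elim
    case (elim \<omega>)
    have "summable (\<lambda>n. c n \<omega> * (s n \<omega>)\<^sup>2)"
      using summable_mult[OF conjunct1[OF elim(1)], of "1 / 2"] by (simp add: mult.assoc)
    then have "\<forall>\<eta>>0. \<forall>m. \<exists>n\<ge>m. (s n \<omega>)\<^sup>2 < \<eta>"
      using elim(2) nonneg[OF elim(3)] by (intro not_summable_imp_frequently_less) auto
    then show ?case
      using elim(1) nonneg[OF elim(3)] A3 unfolding s_def by (intro tendsto_infdist_Icc_zero) auto
  qed
qed

end
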